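(* Let $r,k$ be positive integers and $n$ an integer. Then for every $l\ge1$ $$\left.\frac{d^l}{dt^l}M_r(t;n,k)\right|_{t=1}=\sum_{m=1}^{l}s(l,m)\,\frac{Q_r(n,k,m)}{k^{rm}},$$ and $$M_r(t;n,k)=\delta_{k^r\mid n}+\sum_{l=1}^{k}\frac{(t-1)^l}{l!}\sum_{m=1}^{l}s(l,m)\frac{Q_r(n,k,m)}{k^{rm}},\qquad M_r(e^\lambda;n,k)=\delta_{k^r\mid n}+\sum_{l=1}^{\infty}\frac{\lambda^l}{l!}\frac{Q_r(n,k,l)}{k^{rl}}.$$ In particular, for $r=1$: $\left.\frac{d^l}{dt^l}M(t;n,k)\right|_{t=1}=\sum_{m=1}^{l}s(l,m)\frac{Q_1(n,k,m)}{k^{m}}$ for $l\ge1$, $M(t;n,k)=\delta_{k\mid n}+\sum_{l=1}^{k}\frac{(t-1)^l}{l!}\sum_{m=1}^{l}s(l,m)\frac{Q_1(n,k,m)}{k^{m}}$, and $M(e^\lambda;n,k)=\delta_{k\mid n}+\sum_{l=1}^{\infty}\frac{\lambda^l}{l!}\frac{Q_1(n,k,l)}{k^{l}}$.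
   Context: For positive integers $a,b,r$, $(a,b)_r$ denotes the largest $r$-th power $e^r$ dividing both $a$ and $b$. The $r$-Ramanujan sum is $c_r(n,k):=\sum_{1\le m\le k^r,\ (m,k^r)_r=1}\epsilon_{k^r}^{mn}$ with $\epsilon_N:=e^{2\pi i/N}$; for $r=1$ this is the classical Ramanujan sum $c(n,k)$. Define $M_r(t;n,k):=\frac{1}{k^r}\sum_{d\mid k}c_r(n,k/d)\,t^d$ and $M(t;n,k):=M_1(t;n,k)$. Let $\delta_{k^r\mid n}:=M_r(1;n,k)$, which equals $1$ if $k^r\mid n$ and $0$ otherwise. For a positive integer $m$, fix integers $a_1,\dots,a_m$ with $(a_i,k)=1$, and let $Q_r(n,k,m)$ be the number of solutions $(x_1,\dots,x_m;y_1,\dots,y_m)$ with $x_i$ taken modulo $k$ and $y_i$ taken modulo $k^r$ of the Cohen semilinear congruence $a_1x_1^ry_1+\dots+a_mx_m^ry_m\equiv n\pmod{k^r}$. The Stirling numbers of the first kind $s(l,m)$ are defined by $\prod_{i=0}^{l-1}(t-i)=\sum_{m=0}^{l}s(l,m)t^m$. *)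

theory Defs
  imports "HOL-Analysis.Analysis" "HOL-Library.FuncSet" "HOL-Computational_Algebra.Polynomial"
    "HOL-Number_Theory.Cong"
begin

definition rgcd :: "nat \<Rightarrow> nat \<Rightarrow> nat \<Rightarrow> nat" where
  "rgcd r a b = Max {e ^ r | e. e \<ge> 1 \<and> e ^ r dvd a \<and> e ^ r dvd b}"

definition unit_root :: "nat \<Rightarrow> complex" where
  "unit_root N = exp (2 * of_real pi * \<i> / of_nat N)"

definition ram_r :: "nat \<Rightarrow> int \<Rightarrow> nat \<Rightarrow> complex" where
  "ram_r r n k = (\<Sum>m \<in> {m. 1 \<le> m \<and> m \<le> k ^ r \<and> rgcd r m (k ^ r) = 1}.
      unit_root (k ^ r) powi (int m * n))"

definition M_r :: "nat \<Rightarrow> complex \<Rightarrow> int \<Rightarrow> nat \<Rightarrow> complex" where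
  "M_r r t n k = (1 / of_nat (k ^ r)) * (\<Sum>d \<in> {d. d dvd k}. ram_r r n (k div d) * t ^ d)"

definition delta_r :: "nat \<Rightarrow> int \<Rightarrow> nat \<Rightarrow> complex" where
  "delta_r r n k = (if int (k ^ r) dvd n then 1 else 0)"

text \<open>Q_r(n,k,m): number of solutions of a_1 x_1^r y_1 + ... + a_m x_m^r y_m = n (mod k^r),
  x_i mod k, y_i mod k^r; the coefficients a_1, a_2, ... are given by the sequence a.\<close>
definition Q_r :: "nat \<Rightarrow> int \<Rightarrow> nat \<Rightarrow> (nat \<Rightarrow> int) \<Rightarrow> nat \<Rightarrow> nat" where
  "Q_r r n k a m = card {(x, y). x \<in> {1..m} \<rightarrow>\<^sub>E {0..<int k} \<and> y \<in> {1..m} \<rightarrow>\<^sub>E {0..<int (k ^ r)} \<and>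
      [(\<Sum>i=1..m. a i * x i ^ r * y i) = n] (mod int (k ^ r))}"

definition stirling1s :: "nat \<Rightarrow> nat \<Rightarrow> int" where
  "stirling1s l m = coeff (\<Prod>i<l. [:- int i, 1:]) m"

end

theory Submission
  imports Defs
begin

text \<open>
  Put \<open>c d = c_r(n, k/d) / k^r\<close>, so that \<open>M_r(t;n,k) = (SUM d|k. c d * t^d)\<close>. Everything rests
  on the moment identity \<open>Q_r(n,k,m) / k^(r m) = (SUM d|k. c d * d^m)\<close> for all \<open>m \<ge> 0\<close>, whose
  case \<open>m = 0\<close> is \<open>\<delta>\<close>: the \<open>l\<close>-th derivative at \<open>1\<close> is \<open>SUM d|k. c d * d(d-1)...(d-l+1)\<close>,
  which the Stirling numbers turn into moments; expanding \<open>t^d = ((t-1)+1)^d\<close> gives the Taylor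
  formula; and \<open>M_r(e^\<lambda>) = (SUM d|k. c d * e^(d \<lambda>))\<close> gives the exponential series.

  For the moment identity, detect the congruence with the characters \<open>j \<mapsto> \<epsilon>^(j s)\<close> modulo
  \<open>k^r\<close>. The sum over the \<open>y_i\<close> then vanishes unless \<open>k^r\<close> divides \<open>j a_i x_i^r\<close>, and as \<open>a_i\<close> is
  a unit this leaves \<open>k^r Q_r = k^(r m) SUM j. \<epsilon>^(j n) N(j)^m\<close>, where \<open>N(j)\<close> counts the \<open>x\<close>
  modulo \<open>k\<close> with \<open>k^r | j x^r\<close>. Now \<open>N(j)\<close> is the largest divisor \<open>d\<close> of \<open>k\<close> with
  \<open>d^r | j\<close>, and \<open>N(j) = d\<close> holds exactly for \<open>j = m d^r\<close> with \<open>(m, (k/d)^r)_r = 1\<close>; grouping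
  the \<open>j\<close> by \<open>N(j)\<close> therefore produces the \<open>r\<close>-Ramanujan sums \<open>c_r(n, k/d)\<close>.
\<close>

section \<open>Roots of unity\<close>

lemma unit_root_nonzero [simp]: "unit_root N \<noteq> 0"
  by (simp add: unit_root_def)

lemma unit_root_powi: "unit_root N powi z = exp (2 * of_real pi * \<i> * of_int z / of_nat N)"
  unfolding unit_root_def exp_power_int by (simp add: field_simps)

lemma unit_root_powi_add: "unit_root N powi (a + b) = unit_root N powi a * unit_root N powi b"
  by (simp add: power_int_add)

lemma unit_root_powi_sum:
  "finite I \<Longrightarrow> unit_root N powi (\<Sum>i\<in>I. f i) = (\<Prod>i\<in>I. unit_root N powi f i)"
  by (induction I rule: finite_induct) (simp_all add: unit_root_powi_add)

lemma unit_root_powi_mult_of_nat: "unit_root N powi (s * int v) = (unit_root N powi s) ^ v"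
  by (simp add: power_int_mult)

lemma unit_root_powi_eq_1_iff:
  assumes "N > 0"
  shows "unit_root N powi s = 1 \<longleftrightarrow> int N dvd s"
proof -
  have "2 * pi * of_int s / of_nat N = of_int (2 * q) * pi \<longleftrightarrow> s = int N * q" for q
  proof -
    have "2 * pi * of_int s / of_nat N = of_int (2 * q) * pi \<longleftrightarrow> real_of_int s = of_int (int N * q)"
      using assms by (simp add: field_simps)
    then show ?thesis by linarith
  qed
  then show ?thesis
    unfolding unit_root_powi exp_eq_1 dvd_def by simp
qed

lemma unit_root_powi_scale:
  assumes "D > 0"
  shows "unit_root (K * D) powi (int (m * D) * n) = unit_root K powi (int m * n)"
  unfolding unit_root_powi using assms by (simp add: field_simps)

lemma sum_unit_root_powi_lessThan:
  assumes "N > 0"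
  shows "(\<Sum>v<N. unit_root N powi (s * int v)) = (if int N dvd s then of_nat N else 0)"
proof -
  let ?w = "unit_root N powi s"
  have "?w ^ N = 1"
    using unit_root_powi_eq_1_iff[OF assms, of "s * int N"] by (simp add: unit_root_powi_mult_of_nat)
  then show ?thesis
    using sum_gp_strict[of ?w N] unit_root_powi_eq_1_iff[OF assms, of s]
    by (simp add: unit_root_powi_mult_of_nat)
qed

lemma sum_unit_root_powi_atLeastAtMost:
  assumes "N > 0"
  shows "(\<Sum>j=1..N. unit_root N powi (int j * s)) = (if int N dvd s then of_nat N else 0)"
proof -
  have "(\<Sum>j=1..N. unit_root N powi (int j * s)) = (\<Sum>v<N. unit_root N powi s * unit_root N powi (s * int v))"
    by (simp add: sum.atLeast1_atMost_eq algebra_simps flip: unit_root_powi_add)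
  also have "\<dots> = unit_root N powi s * (if int N dvd s then of_nat N else 0)"
    by (simp add: sum_unit_root_powi_lessThan[OF assms] flip: sum_distrib_left)
  finally show ?thesis
    using unit_root_powi_eq_1_iff[OF assms, of s] by simp
qed

lemma of_nat_card_cong_eq_sum_unit_root:
  assumes "finite A" "N > 0"
  shows "of_nat N * of_nat (card {p\<in>A. [S p = n] (mod int N)})
           = (\<Sum>p\<in>A. \<Sum>j=1..N. unit_root N powi (int j * (n - S p)))"
proof -
  have cong_iff: "[S p = n] (mod int N) \<longleftrightarrow> int N dvd n - S p" for p
    by (simp add: cong_iff_dvd_diff dvd_diff_commute)
  have "(\<Sum>p\<in>A. \<Sum>j=1..N. unit_root N powi (int j * (n - S p)))
               = (\<Sum>p\<in>A. if [S p = n] (mod int N) then of_nat N else 0)"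
    by (simp only: sum_unit_root_powi_atLeastAtMost[OF assms(2)] cong_iff)
  also have "\<dots> = of_nat N * of_nat (card {p\<in>A. [S p = n] (mod int N)})"
    using assms(1) by (simp add: sum.If_cases Int_def conj_commute)
  finally show ?thesis ..
qed

section \<open>The largest divisor of k whose r-th power divides j\<close>

lemma lcm_power_nat: "lcm (a ^ n) (b ^ n) = lcm a b ^ n" for a b :: nat
proof (cases "gcd a b = 0")
  case False
  have "lcm (a ^ n) (b ^ n) * gcd a b ^ n = a ^ n * b ^ n"
    using lcm_mult_gcd[of "a ^ n" "b ^ n"] by simp
  also have "\<dots> = lcm a b ^ n * gcd a b ^ n"
    by (simp flip: power_mult_distrib)
  finally show ?thesis
    using False by (metis mult_right_cancel power_not_zero)
qed (cases n; simp)

text \<open>For \<open>r = 1\<close> this is \<open>gcd k j\<close>.\<close>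

definition root_gcd :: "nat \<Rightarrow> nat \<Rightarrow> nat \<Rightarrow> nat" where
  "root_gcd r k j = Max {d. d dvd k \<and> d ^ r dvd j}"

lemma
  assumes "k > 0"
  shows root_gcd_dvd: "root_gcd r k j dvd k"
    and root_gcd_power_dvd: "root_gcd r k j ^ r dvd j"
    and dvd_root_gcd: "e dvd k \<Longrightarrow> e ^ r dvd j \<Longrightarrow> e dvd root_gcd r k j"
proof -
  define D where "D = {d. d dvd k \<and> d ^ r dvd j}"
  have "finite D"
    unfolding D_def using assms by (auto intro: finite_subset[OF _ finite_divisors_nat])
  moreover have "1 \<in> D"
    unfolding D_def by simp
  ultimately have root_gcd_in: "root_gcd r k j \<in> D"
    unfolding root_gcd_def D_def[symmetric] by (metis Max_in empty_iff)
  then show "root_gcd r k j dvd k" "root_gcd r k j ^ r dvd j"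
    unfolding D_def by auto
  assume "e dvd k" "e ^ r dvd j"
  with root_gcd_in have "lcm e (root_gcd r k j) \<in> D"
    unfolding D_def by (auto simp flip: lcm_power_nat)
  then have "lcm e (root_gcd r k j) \<le> root_gcd r k j"
    unfolding root_gcd_def D_def[symmetric] using \<open>finite D\<close> by simp
  moreover have "lcm e (root_gcd r k j) > 0"
    using root_gcd_in \<open>e dvd k\<close> assms unfolding D_def by (auto intro: lcm_pos_nat dvd_pos_nat)
  ultimately have "lcm e (root_gcd r k j) = root_gcd r k j"
    by (meson dvd_imp_le dvd_lcm2 le_antisym)
  then show "e dvd root_gcd r k j"
    by (metis dvd_lcm1)
qed

lemma root_gcd_eqI:
  assumes "k > 0" "d dvd k" "d ^ r dvd j" "\<And>e. e dvd k \<Longrightarrow> e ^ r dvd j \<Longrightarrow> e dvd d"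
  shows "root_gcd r k j = d"
  using assms root_gcd_dvd root_gcd_power_dvd dvd_root_gcd by (meson dvd_antisym)

lemma power_dvd_mult_power_iff:
  assumes "r > 0" "k > 0"
  shows "k ^ r dvd j * x ^ r \<longleftrightarrow> k div root_gcd r k j dvd x"
proof -
  define d where "d = root_gcd r k j"
  define c where "c = k div d"
  have k_eq: "k = c * d"
    unfolding c_def d_def using root_gcd_dvd[OF assms(2)] by simp
  have "d ^ r dvd j"
    unfolding d_def using root_gcd_power_dvd[OF assms(2)] .
  show ?thesis
    unfolding d_def[symmetric] c_def[symmetric]
  proof
    assume "c dvd x"
    then obtain y where "x = c * y" ..
    then have "j * x ^ r = (j * y ^ r) * c ^ r"
      by (simp add: power_mult_distrib ac_simps)
    moreover have "k ^ r = d ^ r * c ^ r"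
      by (simp add: k_eq power_mult_distrib)
    ultimately show "k ^ r dvd j * x ^ r"
      using \<open>d ^ r dvd j\<close> by (metis dvd_mult2 dvd_refl mult_dvd_mono)
  next
    assume dvd: "k ^ r dvd j * x ^ r"
    obtain k' x' where kx: "k = k' * gcd k x" "x = x' * gcd k x" "coprime k' x'"
      using gcd_coprime_exists[of k x] assms(2) by auto
    have "gcd k x ^ r * k' ^ r dvd gcd k x ^ r * (j * x' ^ r)"
      using dvd kx by (metis mult.commute mult.left_commute power_mult_distrib)
    then have "k' ^ r dvd j * x' ^ r"
      using assms(2) by simp
    then have "k' ^ r dvd j"
      using kx(3) by (simp add: coprime_dvd_mult_left_iff)
    then have "k' dvd d"
      unfolding d_def using kx(1) assms(2) by (metis dvd_root_gcd dvd_triv_left)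
    then obtain t where "d = k' * t" ..
    with k_eq kx(1) assms(2) have "gcd k x = c * t"
      by (metis mult.commute mult.left_commute mult_cancel_left mult_eq_0_iff not_less0)
    then show "c dvd x"
      using kx(2) by (metis dvd_mult dvd_triv_left)
  qed
qed

lemma card_power_dvd_mult_power:
  assumes "r > 0" "k > 0"
  shows "card {x\<in>{0..<k}. k ^ r dvd j * x ^ r} = root_gcd r k j"
proof -
  define d where "d = root_gcd r k j"
  define c where "c = k div d"
  have k_eq: "k = c * d"
    unfolding c_def d_def using root_gcd_dvd[OF assms(2)] by simp
  with assms(2) have "c > 0"
    by simp
  have "k ^ r dvd j * x ^ r \<longleftrightarrow> c dvd x" for x
    using power_dvd_mult_power_iff[OF assms] unfolding c_def d_def .
  then have "{x\<in>{0..<k}. k ^ r dvd j * x ^ r} = (\<lambda>i. c * i) ` {0..<d}"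
    using \<open>c > 0\<close> by (auto simp: k_eq elim!: dvdE)
  also have "card \<dots> = d"
    using \<open>c > 0\<close> by (simp add: card_image inj_on_def)
  finally show ?thesis
    unfolding d_def .
qed

lemma rgcd_eq_1_iff:
  assumes "r > 0" "m > 0" "K > 0"
  shows "rgcd r m K = 1 \<longleftrightarrow> (\<forall>e. e ^ r dvd m \<and> e ^ r dvd K \<longrightarrow> e = 1)"
proof -
  define S where "S = {e ^ r | e. e \<ge> 1 \<and> e ^ r dvd m \<and> e ^ r dvd K}"
  have "finite S"
    by (rule finite_subset[of _ "{..K}"]) (use assms(3) in \<open>auto simp: S_def dest: dvd_imp_le\<close>)
  moreover have "1 \<in> S"
    unfolding S_def by force
  ultimately have "rgcd r m K = 1 \<longleftrightarrow> (\<forall>s\<in>S. s \<le> 1)"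
    unfolding rgcd_def S_def[symmetric] by (metis Max_ge Max_in empty_iff le_antisym)
  also have "\<dots> \<longleftrightarrow> (\<forall>e. e ^ r dvd m \<and> e ^ r dvd K \<longrightarrow> e = 1)"
  proof -
    have "(\<forall>s\<in>S. s \<le> 1) \<longleftrightarrow> (\<forall>e. e \<ge> 1 \<and> e ^ r dvd m \<and> e ^ r dvd K \<longrightarrow> e ^ r \<le> 1)"
      unfolding S_def by blast
    moreover have "e ^ r \<le> 1 \<longleftrightarrow> e = 1" if "e \<ge> 1" for e :: nat
      using that assms(1) power_le_one_iff[of e r] by auto
    moreover have "e \<ge> 1" if "e ^ r dvd m" for e :: nat
      using that assms(1,2) by (cases e) auto
    ultimately show ?thesis
      by (simp only:) blast
  qed
  finally show ?thesis .
qed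

lemma dvd_of_power_dvd_mult_power:
  fixes c d e m r :: nat
  assumes "d > 0" "e dvd c * d" "e ^ r dvd m * d ^ r"
    and coprime: "\<And>e'. e' ^ r dvd m \<Longrightarrow> e' dvd c \<Longrightarrow> e' = 1"
  shows "e dvd d"
proof -
  obtain e' d' where ed: "e = e' * gcd e d" "d = d' * gcd e d" "coprime e' d'"
    using gcd_coprime_exists[of e d] assms(1) by auto
  have "gcd e d ^ r * e' ^ r dvd gcd e d ^ r * (m * d' ^ r)"
    using assms(3) ed by (metis mult.commute mult.left_commute power_mult_distrib)
  then have "e' ^ r dvd m"
    using assms(1) ed(3) by (simp add: coprime_dvd_mult_left_iff)
  moreover have "gcd e d * e' dvd gcd e d * (c * d')"
    using assms(2) ed by (metis mult.commute mult.left_commute)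
  then have "e' dvd c"
    using assms(1) ed(3) by (simp add: coprime_dvd_mult_left_iff)
  ultimately have "e' = 1"
    by (rule coprime)
  then show ?thesis
    using ed by simp
qed

lemma root_gcd_mult_power_eq_iff:
  assumes "r > 0" "k > 0" "d dvd k" "m > 0"
  shows "root_gcd r k (m * d ^ r) = d \<longleftrightarrow> rgcd r m ((k div d) ^ r) = 1"
proof -
  define c where "c = k div d"
  have k_eq: "k = c * d"
    unfolding c_def using assms(3) by simp
  with assms(2) have "c > 0" "d > 0"
    by auto
  have "rgcd r m (c ^ r) = 1 \<longleftrightarrow> (\<forall>e. e ^ r dvd m \<and> e dvd c \<longrightarrow> e = 1)"
    using rgcd_eq_1_iff[of r m "c ^ r"] assms(1,4) \<open>c > 0\<close> by simp
  also have "\<dots> \<longleftrightarrow> root_gcd r k (m * d ^ r) = d"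
  proof
    assume coprime: "\<forall>e. e ^ r dvd m \<and> e dvd c \<longrightarrow> e = 1"
    show "root_gcd r k (m * d ^ r) = d"
    proof (rule root_gcd_eqI[OF assms(2,3)])
      fix e assume "e dvd k" "e ^ r dvd m * d ^ r"
      show "e dvd d"
      proof (rule dvd_of_power_dvd_mult_power[OF \<open>d > 0\<close>])
        show "e dvd c * d"
          using \<open>e dvd k\<close> k_eq by simp
        show "e ^ r dvd m * d ^ r"
          by fact
        show "e' = 1" if "e' ^ r dvd m" "e' dvd c" for e'
          using coprime that by blast
      qed
    qed simp
  next
    assume d_eq: "root_gcd r k (m * d ^ r) = d"
    show "\<forall>e. e ^ r dvd m \<and> e dvd c \<longrightarrow> e = 1"
    proof (intro allI impI)
      fix e assume "e ^ r dvd m \<and> e dvd c"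
      then have "e * d dvd k" "(e * d) ^ r dvd m * d ^ r"
        by (auto simp: k_eq power_mult_distrib)
      then have "d * e dvd d * 1"
        using dvd_root_gcd[OF assms(2)] d_eq by (metis mult.commute mult_1_right)
      then show "e = 1"
        using \<open>d > 0\<close> by simp
    qed
  qed
  finally show ?thesis
    unfolding c_def ..
qed

lemma root_gcd_fiber:
  assumes "r > 0" "k > 0" "d dvd k"
  shows "{j\<in>{1..k ^ r}. root_gcd r k j = d}
           = (\<lambda>m. m * d ^ r) ` {m. 1 \<le> m \<and> m \<le> (k div d) ^ r \<and> rgcd r m ((k div d) ^ r) = 1}"
proof -
  define c where "c = k div d"
  have k_eq: "k ^ r = c ^ r * d ^ r"
    unfolding c_def using assms(3) by (simp flip: power_mult_distrib)
  have "d > 0"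
    using assms(2,3) by (auto intro: gr0I)
  show ?thesis
    unfolding c_def[symmetric]
  proof (intro set_eqI iffI)
    fix j assume j: "j \<in> {j\<in>{1..k ^ r}. root_gcd r k j = d}"
    then have "d ^ r dvd j"
      using root_gcd_power_dvd[OF assms(2), of r j] by simp
    then obtain m where "j = m * d ^ r"
      by (metis dvdE mult.commute)
    with j k_eq \<open>d > 0\<close> root_gcd_mult_power_eq_iff[OF assms, of m]
    show "j \<in> (\<lambda>m. m * d ^ r) ` {m. 1 \<le> m \<and> m \<le> c ^ r \<and> rgcd r m (c ^ r) = 1}"
      by (auto simp: c_def)
  next
    fix j assume "j \<in> (\<lambda>m. m * d ^ r) ` {m. 1 \<le> m \<and> m \<le> c ^ r \<and> rgcd r m (c ^ r) = 1}"
    with k_eq \<open>d > 0\<close> root_gcd_mult_power_eq_iff[OF assms]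
    show "j \<in> {j\<in>{1..k ^ r}. root_gcd r k j = d}"
      by (auto simp: c_def)
  qed
qed

lemma sum_unit_root_powi_root_gcd:
  assumes "r > 0" "k > 0"
  shows "(\<Sum>j=1..k ^ r. unit_root (k ^ r) powi (int j * n) * g (root_gcd r k j))
           = (\<Sum>d | d dvd k. ram_r r n (k div d) * g d)"
proof -
  let ?h = "\<lambda>j. unit_root (k ^ r) powi (int j * n) * g (root_gcd r k j)"
  have "sum ?h {1..k ^ r} = (\<Sum>d | d dvd k. sum ?h {j\<in>{1..k ^ r}. root_gcd r k j = d})"
    by (rule sum.group[symmetric]) (use assms(2) root_gcd_dvd in auto)
  also have "\<dots> = (\<Sum>d | d dvd k. ram_r r n (k div d) * g d)"
  proof (rule sum.cong[OF refl])
    fix d assume "d \<in> {d. d dvd k}"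
    then have "d dvd k" by simp
    define c where "c = k div d"
    have k_eq: "k ^ r = c ^ r * d ^ r"
      unfolding c_def using \<open>d dvd k\<close> by (simp flip: power_mult_distrib)
    have "d > 0"
      using assms(2) \<open>d dvd k\<close> by (auto intro: gr0I)
    define R where "R = {m. 1 \<le> m \<and> m \<le> c ^ r \<and> rgcd r m (c ^ r) = 1}"
    have "sum ?h {j\<in>{1..k ^ r}. root_gcd r k j = d} = (\<Sum>m\<in>R. ?h (m * d ^ r))"
      unfolding root_gcd_fiber[OF assms \<open>d dvd k\<close>] c_def[symmetric] R_def[symmetric]
      using \<open>d > 0\<close> by (simp add: sum.reindex inj_on_def)
    also have "\<dots> = (\<Sum>m\<in>R. unit_root (c ^ r) powi (int m * n) * g d)"
    proof (rule sum.cong[OF refl])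
      fix m assume "m \<in> R"
      then have "root_gcd r k (m * d ^ r) = d"
        using root_gcd_mult_power_eq_iff[OF assms \<open>d dvd k\<close>, of m] unfolding R_def c_def by simp
      then show "?h (m * d ^ r) = unit_root (c ^ r) powi (int m * n) * g d"
        using unit_root_powi_scale[of "d ^ r" "c ^ r" m n] \<open>d > 0\<close> k_eq by simp
    qed
    also have "\<dots> = ram_r r n c * g d"
      unfolding ram_r_def R_def by (simp add: sum_distrib_right)
    finally show "sum ?h {j\<in>{1..k ^ r}. root_gcd r k j = d} = ram_r r n (k div d) * g d"
      unfolding c_def .
  qed
  finally show ?thesis .
qed

section \<open>Counting solutions by additive characters\<close>

lemma sum_PiE_sum_PiE_prod:
  fixes f :: "'a \<Rightarrow> 'b \<Rightarrow> 'c \<Rightarrow> 'd::comm_semiring_1"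
  assumes "finite I" "finite A" "finite B"
  shows "(\<Sum>x\<in>I \<rightarrow>\<^sub>E A. \<Sum>y\<in>I \<rightarrow>\<^sub>E B. \<Prod>i\<in>I. f i (x i) (y i))
           = (\<Prod>i\<in>I. \<Sum>u\<in>A. \<Sum>v\<in>B. f i u v)"
proof -
  have "(\<Prod>i\<in>I. \<Sum>u\<in>A. \<Sum>v\<in>B. f i u v) = (\<Sum>x\<in>I \<rightarrow>\<^sub>E A. \<Prod>i\<in>I. \<Sum>v\<in>B. f i (x i) v)"
    using prod_sum_PiE[of I "\<lambda>_. A" "\<lambda>i u. \<Sum>v\<in>B. f i u v"] assms by simp
  also have "\<dots> = (\<Sum>x\<in>I \<rightarrow>\<^sub>E A. \<Sum>y\<in>I \<rightarrow>\<^sub>E B. \<Prod>i\<in>I. f i (x i) (y i))"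
    using assms by (intro sum.cong refl) (simp add: prod_sum_PiE)
  finally show ?thesis ..
qed

lemma sum_atLeastLessThan_int: "(\<Sum>v\<in>{0..<int n}. f v) = (\<Sum>v<n. f (int v))"
proof -
  have "{0..<int n} = int ` {..<n}"
    using image_int_atLeastLessThan[of 0 n] by (simp add: atLeast0LessThan)
  then show ?thesis by (simp add: sum.reindex)
qed

lemma sum_sum_unit_root_powi_power:
  assumes "r > 0" "k > 0" "coprime b (int k)"
  shows "(\<Sum>u\<in>{0..<int k}. \<Sum>v\<in>{0..<int (k ^ r)}. unit_root (k ^ r) powi (- (int j * b * u ^ r) * v))
           = of_nat (k ^ r) * of_nat (root_gcd r k j)"
proof -
  let ?N = "k ^ r"
  have sum_v: "(\<Sum>v\<in>{0..<int ?N}. unit_root ?N powi (s * v)) = (if int ?N dvd s then of_nat ?N else 0)"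
    for s
    unfolding sum_atLeastLessThan_int by (rule sum_unit_root_powi_lessThan) (use assms(2) in simp)
  have "coprime (int ?N) b"
    using assms(3) by (simp add: coprime_commute)
  then have dvd_iff: "int ?N dvd - (int j * b * int x ^ r) \<longleftrightarrow> ?N dvd j * x ^ r" for x
    by (simp add: coprime_dvd_mult_right_iff ac_simps flip: of_nat_power of_nat_mult of_nat_dvd_iff)
  have "(\<Sum>u\<in>{0..<int k}. \<Sum>v\<in>{0..<int ?N}. unit_root ?N powi (- (int j * b * u ^ r) * v))
          = (\<Sum>u\<in>{0..<int k}. if int ?N dvd - (int j * b * u ^ r) then of_nat ?N else 0)"
    by (simp only: sum_v)
  also have "\<dots> = (\<Sum>x<k. if ?N dvd j * x ^ r then of_nat ?N else 0)"
    by (simp only: sum_atLeastLessThan_int dvd_iff)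
  also have "\<dots> = of_nat ?N * of_nat (card {x\<in>{0..<k}. ?N dvd j * x ^ r})"
    by (simp add: sum.If_cases lessThan_atLeast0 Int_def conj_commute)
  finally show ?thesis
    using card_power_dvd_mult_power[OF assms(1,2)] by simp
qed

lemma sum_PiE_sum_PiE_prod_unit_root_powi:
  assumes "r > 0" "k > 0" "\<forall>i\<ge>1. coprime (a i) (int k)"
  shows "(\<Sum>x\<in>{1..m} \<rightarrow>\<^sub>E {0..<int k}. \<Sum>y\<in>{1..m} \<rightarrow>\<^sub>E {0..<int (k ^ r)}.
            \<Prod>i=1..m. unit_root (k ^ r) powi (- (int j * a i * x i ^ r) * y i))
           = (of_nat (k ^ r) * of_nat (root_gcd r k j)) ^ m"
proof -
  have "(\<Sum>x\<in>{1..m} \<rightarrow>\<^sub>E {0..<int k}. \<Sum>y\<in>{1..m} \<rightarrow>\<^sub>E {0..<int (k ^ r)}.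
           \<Prod>i=1..m. unit_root (k ^ r) powi (- (int j * a i * x i ^ r) * y i))
          = (\<Prod>i=1..m. \<Sum>u\<in>{0..<int k}. \<Sum>v\<in>{0..<int (k ^ r)}.
               unit_root (k ^ r) powi (- (int j * a i * u ^ r) * v))"
    by (rule sum_PiE_sum_PiE_prod) auto
  also have "\<dots> = (\<Prod>i=1..m. of_nat (k ^ r) * of_nat (root_gcd r k j))"
  proof (rule prod.cong[OF refl])
    fix i assume "i \<in> {1..m}"
    with assms(3) have "coprime (a i) (int k)"
      by simp
    then show "(\<Sum>u\<in>{0..<int k}. \<Sum>v\<in>{0..<int (k ^ r)}. unit_root (k ^ r) powi (- (int j * a i * u ^ r) * v))
                 = of_nat (k ^ r) * of_nat (root_gcd r k j)"
      by (rule sum_sum_unit_root_powi_power[OF assms(1,2)])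
  qed
  finally show ?thesis
    by simp
qed

lemma Q_r_eq_sum_unit_root:
  assumes "r > 0" "k > 0" "\<forall>i\<ge>1. coprime (a i) (int k)"
  shows "of_nat (k ^ r) * (of_nat (Q_r r n k a m) :: complex)
           = of_nat (k ^ r) ^ m * (\<Sum>j=1..k ^ r. unit_root (k ^ r) powi (int j * n) * of_nat (root_gcd r k j) ^ m)"
proof -
  let ?N = "k ^ r"
  define X where "X = {1..m} \<rightarrow>\<^sub>E {0..<int k}"
  define Y where "Y = {1..m} \<rightarrow>\<^sub>E {0..<int ?N}"
  define S where "S p = (\<Sum>i=1..m. a i * fst p i ^ r * snd p i)" for p
  have "finite X" "finite Y"
    unfolding X_def Y_def by (simp_all add: finite_PiE)
  have Q_eq: "Q_r r n k a m = card {p\<in>X \<times> Y. [S p = n] (mod int ?N)}"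
    unfolding Q_r_def X_def Y_def S_def by (rule arg_cong[where f = card]) auto
  have "of_nat ?N * (of_nat (Q_r r n k a m) :: complex)
          = (\<Sum>p\<in>X \<times> Y. \<Sum>j=1..?N. unit_root ?N powi (int j * (n - S p)))"
    unfolding Q_eq
    by (rule of_nat_card_cong_eq_sum_unit_root) (use \<open>finite X\<close> \<open>finite Y\<close> assms(2) in simp_all)
  also have "\<dots> = (\<Sum>j=1..?N. unit_root ?N powi (int j * n) * (\<Sum>x\<in>X. \<Sum>y\<in>Y.
                     \<Prod>i=1..m. unit_root ?N powi (- (int j * a i * x i ^ r) * y i)))"
  proof -
    have "int j * (n - S p) = int j * n + (\<Sum>i=1..m. - (int j * a i * fst p i ^ r) * snd p i)" for j p
      by (simp add: S_def algebra_simps sum_distrib_left sum_negf)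
    then have "unit_root ?N powi (int j * (n - S p)) = unit_root ?N powi (int j * n) *
                 (\<Prod>i=1..m. unit_root ?N powi (- (int j * a i * fst p i ^ r) * snd p i))" for j p
      by (simp add: unit_root_powi_add unit_root_powi_sum)
    then show ?thesis
      by (subst sum.swap) (simp add: sum_distrib_left sum.cartesian_product case_prod_beta)
  qed
  also have "\<dots> = of_nat ?N ^ m * (\<Sum>j=1..?N. unit_root ?N powi (int j * n) * of_nat (root_gcd r k j) ^ m)"
    unfolding X_def Y_def sum_PiE_sum_PiE_prod_unit_root_powi[OF assms]
    by (simp add: sum_distrib_left power_mult_distrib ac_simps)
  finally show ?thesis .
qed

lemma Q_r_0: "Q_r r n k a 0 = (if int (k ^ r) dvd n then 1 else 0)"
proof -
  have "[0 = n] (mod int (k ^ r)) \<longleftrightarrow> int (k ^ r) dvd n"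
    by (metis cong_sym_eq cong_0_iff)
  then have "{(x, y). x \<in> {1..0::nat} \<rightarrow>\<^sub>E {0..<int k} \<and> y \<in> {1..0::nat} \<rightarrow>\<^sub>E {0..<int (k ^ r)} \<and>
                [(\<Sum>i=1..0. a i * x i ^ r * y i) = n] (mod int (k ^ r))}
               = (if int (k ^ r) dvd n then {(\<lambda>_. undefined, \<lambda>_. undefined)} else {})"
    by auto
  then show ?thesis
    unfolding Q_r_def by simp
qed

lemma Q_r_moment:
  assumes "r > 0" "k > 0" "\<forall>i\<ge>1. coprime (a i) (int k)"
  shows "of_nat (Q_r r n k a m) / of_nat k ^ (r * m)
           = (\<Sum>d | d dvd k. ram_r r n (k div d) / of_nat (k ^ r) * of_nat d ^ m)"
proof -
  have "of_nat (k ^ r) * (of_nat (Q_r r n k a m) :: complex)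
          = of_nat (k ^ r) ^ m * (\<Sum>d | d dvd k. ram_r r n (k div d) * of_nat d ^ m)"
    unfolding Q_r_eq_sum_unit_root[OF assms]
    using sum_unit_root_powi_root_gcd[OF assms(1,2), of n "\<lambda>d. of_nat d ^ m"] by simp
  moreover have "(of_nat (k ^ r) :: complex) \<noteq> 0"
    using assms(2) by simp
  ultimately have "of_nat (Q_r r n k a m) / of_nat (k ^ r) ^ m
                     = (\<Sum>d | d dvd k. ram_r r n (k div d) * of_nat d ^ m) / (of_nat (k ^ r) :: complex)"
    by (simp add: field_simps)
  then show ?thesis
    by (simp add: power_mult sum_divide_distrib)
qed

section \<open>Finite sums of monomials\<close>

definition falling_factorial :: "'a::comm_ring_1 \<Rightarrow> nat \<Rightarrow> 'a" where
  "falling_factorial x l = (\<Prod>i<l. x - of_nat i)"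

lemma falling_factorial_Suc: "falling_factorial x (Suc l) = falling_factorial x l * (x - of_nat l)"
  by (simp add: falling_factorial_def)

lemma falling_factorial_of_nat_eq_0: "d < l \<Longrightarrow> falling_factorial (of_nat d) l = 0"
  unfolding falling_factorial_def by (rule prod_zero) auto

lemma of_int_falling_factorial: "of_int (falling_factorial x l) = falling_factorial (of_int x) l"
  by (simp add: falling_factorial_def)

lemma binomial_eq_falling_factorial:
  "(of_nat (d choose l) :: 'a::field_char_0) = falling_factorial (of_nat d) l / fact l"
  by (simp add: binomial_gbinomial gbinomial_prod_rev falling_factorial_def atLeast0LessThan)

lemma sum_stirling1s_power:
  assumes "l \<ge> 1"
  shows "(\<Sum>m=1..l. stirling1s l m * x ^ m) = falling_factorial x l"
proof -
  define P where "P = (\<Prod>i<l. [:- int i, 1:])"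
  have poly_P: "poly P y = falling_factorial y l" for y
    unfolding P_def falling_factorial_def by (simp add: poly_prod)
  have "degree P \<le> l"
    unfolding P_def using degree_prod_sum_le[of "{..<l}" "\<lambda>i. [:- int i, 1:]"] by simp
  moreover have "coeff P 0 = 0"
    using poly_P[of 0] assms unfolding falling_factorial_def
    by (simp add: poly_0_coeff_0 prod_zero_iff)
  ultimately have "poly P x = (\<Sum>m=1..l. coeff P m * x ^ m)"
    unfolding poly_altdef
    by (intro sum.mono_neutral_cong) (auto simp: coeff_eq_0 Suc_le_eq intro: le_neq_implies_less)
  then show ?thesis
    unfolding stirling1s_def P_def[symmetric] poly_P by simp
qed

lemma sum_stirling1s_moments:
  fixes c :: "nat \<Rightarrow> 'a::comm_ring_1"
  assumes "l \<ge> 1"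
  shows "(\<Sum>m=1..l. of_int (stirling1s l m) * (\<Sum>d\<in>D. c d * of_nat d ^ m))
           = (\<Sum>d\<in>D. c d * falling_factorial (of_nat d) l)"
proof -
  have "(\<Sum>m=1..l. of_int (stirling1s l m) * (of_nat d :: 'a) ^ m) = falling_factorial (of_nat d) l" for d
  proof -
    have "(\<Sum>m=1..l. of_int (stirling1s l m) * (of_nat d :: 'a) ^ m)
            = of_int (\<Sum>m=1..l. stirling1s l m * int d ^ m)"
      by simp
    also have "\<dots> = falling_factorial (of_nat d) l"
      unfolding sum_stirling1s_power[OF assms] of_int_falling_factorial by simp
    finally show ?thesis .
  qed
  moreover have "(\<Sum>m=1..l. of_int (stirling1s l m) * (\<Sum>d\<in>D. c d * of_nat d ^ m))
                   = (\<Sum>d\<in>D. c d * (\<Sum>m=1..l. of_int (stirling1s l m) * of_nat d ^ m))"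
    unfolding sum_distrib_left by (subst sum.swap) (simp add: algebra_simps)
  ultimately show ?thesis
    by (simp only:)
qed

lemma higher_deriv_sum_monomials:
  fixes c :: "nat \<Rightarrow> 'a::real_normed_field"
  assumes "finite D"
  shows "(deriv ^^ l) (\<lambda>t. \<Sum>d\<in>D. c d * t ^ d)
           = (\<lambda>t. \<Sum>d\<in>D. c d * falling_factorial (of_nat d) l * t ^ (d - l))"
proof (induction l)
  case 0
  then show ?case
    by (simp add: falling_factorial_def)
next
  case (Suc l)
  have "((\<lambda>t. \<Sum>d\<in>D. c d * falling_factorial (of_nat d) l * t ^ (d - l)) has_field_derivative
          (\<Sum>d\<in>D. c d * falling_factorial (of_nat d) (Suc l) * t ^ (d - Suc l))) (at t)" for t
  proof -
    have pow: "((\<lambda>x. x ^ (d - l)) has_field_derivative of_nat (d - l) * t ^ (d - l - 1)) (at t)" for d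
      using DERIV_power[OF DERIV_ident, of "d - l" t UNIV] by simp
    have "c d * falling_factorial (of_nat d) l * (of_nat (d - l) * t ^ (d - l - 1))
            = c d * falling_factorial (of_nat d) (Suc l) * t ^ (d - Suc l)" for d
      by (cases "l \<le> d") (simp_all add: falling_factorial_Suc falling_factorial_of_nat_eq_0 of_nat_diff)
    moreover have "((\<lambda>t. \<Sum>d\<in>D. c d * falling_factorial (of_nat d) l * t ^ (d - l)) has_field_derivative
          (\<Sum>d\<in>D. c d * falling_factorial (of_nat d) l * (of_nat (d - l) * t ^ (d - l - 1)))) (at t)"
      by (intro DERIV_sum DERIV_cmult pow)
    ultimately show ?thesis
      by (simp only:)
  qed
  then have "deriv (\<lambda>t. \<Sum>d\<in>D. c d * falling_factorial (of_nat d) l * t ^ (d - l))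
               = (\<lambda>t. \<Sum>d\<in>D. c d * falling_factorial (of_nat d) (Suc l) * t ^ (d - Suc l))"
    by (intro ext DERIV_imp_deriv)
  with Suc.IH show ?case
    by simp
qed

lemma higher_deriv_sum_monomials_at_1:
  fixes c :: "nat \<Rightarrow> 'a::real_normed_field"
  assumes "finite D" "l \<ge> 1"
  shows "(deriv ^^ l) (\<lambda>t. \<Sum>d\<in>D. c d * t ^ d) 1
           = (\<Sum>m=1..l. of_int (stirling1s l m) * (\<Sum>d\<in>D. c d * of_nat d ^ m))"
  unfolding higher_deriv_sum_monomials[OF assms(1)] sum_stirling1s_moments[OF assms(2)] by simp

lemma power_eq_sum_falling_factorial:
  fixes t :: "'a::field_char_0"
  assumes "d \<le> K"
  shows "t ^ d = (\<Sum>l\<le>K. (t - 1) ^ l / fact l * falling_factorial (of_nat d) l)"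
proof -
  have "t ^ d = (\<Sum>l\<le>d. of_nat (d choose l) * (t - 1) ^ l)"
    using binomial_ring[of "t - 1" 1 d] by simp
  also have "\<dots> = (\<Sum>l\<le>K. of_nat (d choose l) * (t - 1) ^ l)"
    by (rule sum.mono_neutral_left) (use assms in auto)
  finally show ?thesis
    by (simp add: binomial_eq_falling_factorial field_simps)
qed

lemma sum_monomials_Taylor_at_1:
  fixes c :: "nat \<Rightarrow> 'a::field_char_0"
  assumes "finite D" "D \<subseteq> {..K}"
  shows "(\<Sum>d\<in>D. c d * t ^ d) = (\<Sum>d\<in>D. c d) +
           (\<Sum>l=1..K. (t - 1) ^ l / fact l *
              (\<Sum>m=1..l. of_int (stirling1s l m) * (\<Sum>d\<in>D. c d * of_nat d ^ m)))"
proof -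
  have "(\<Sum>d\<in>D. c d * t ^ d)
          = (\<Sum>l\<le>K. (t - 1) ^ l / fact l * (\<Sum>d\<in>D. c d * falling_factorial (of_nat d) l))"
    using assms(2) by (simp add: power_eq_sum_falling_factorial[of _ K] subset_eq
                          sum_distrib_left sum.swap[of _ D] algebra_simps cong: sum.cong)
  also have "\<dots> = (\<Sum>d\<in>D. c d) +
           (\<Sum>l=1..K. (t - 1) ^ l / fact l * (\<Sum>d\<in>D. c d * falling_factorial (of_nat d) l))"
  proof -
    have "{..K} = insert 0 {1..K}"
      by auto
    then show ?thesis
      by (simp add: falling_factorial_def)
  qed
  also have "\<dots> = (\<Sum>d\<in>D. c d) +
           (\<Sum>l=1..K. (t - 1) ^ l / fact l *
              (\<Sum>m=1..l. of_int (stirling1s l m) * (\<Sum>d\<in>D. c d * of_nat d ^ m)))"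
  proof (intro arg_cong2[where f = "(+)"] sum.cong refl)
    fix l assume "l \<in> {1..K}"
    then have "l \<ge> 1"
      by simp
    then show "(t - 1) ^ l / fact l * (\<Sum>d\<in>D. c d * falling_factorial (of_nat d) l)
                 = (t - 1) ^ l / fact l * (\<Sum>m=1..l. of_int (stirling1s l m) * (\<Sum>d\<in>D. c d * of_nat d ^ m))"
      by (simp only: sum_stirling1s_moments)
  qed
  finally show ?thesis .
qed

lemma sum_monomials_exp_sums:
  fixes c :: "nat \<Rightarrow> 'a::{real_normed_field,banach}"
  assumes "finite D"
  shows "(\<lambda>j. z ^ Suc j / fact (Suc j) * (\<Sum>d\<in>D. c d * of_nat d ^ Suc j))
           sums ((\<Sum>d\<in>D. c d * exp z ^ d) - (\<Sum>d\<in>D. c d))"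
proof -
  have "(\<lambda>j. (of_nat d * z) ^ j / fact j) sums exp z ^ d" for d
    using exp_converges[of "of_nat d * z"] unfolding exp_of_nat_mult
    by (simp add: scaleR_conv_of_real divide_inverse mult.commute)
  then have "(\<lambda>j. c d * ((of_nat d * z) ^ j / fact j)) sums (c d * exp z ^ d)" for d
    by (rule sums_mult)
  then have "(\<lambda>j. \<Sum>d\<in>D. c d * ((of_nat d * z) ^ j / fact j)) sums (\<Sum>d\<in>D. c d * exp z ^ d)"
    by (rule sums_sum)
  moreover have "(\<Sum>d\<in>D. c d * ((of_nat d * z) ^ j / fact j)) = z ^ j / fact j * (\<Sum>d\<in>D. c d * of_nat d ^ j)"
    for j
    by (simp add: sum_distrib_left power_mult_distrib algebra_simps)
  ultimately have "(\<lambda>j. z ^ j / fact j * (\<Sum>d\<in>D. c d * of_nat d ^ j)) sums (\<Sum>d\<in>D. c d * exp z ^ d)"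
    by simp
  then show ?thesis
    using sums_Suc_iff[of "\<lambda>j. z ^ j / fact j * (\<Sum>d\<in>D. c d * of_nat d ^ j)"] by simp
qed

theorem proposition3:
  fixes r k :: nat and n :: int and a :: "nat \<Rightarrow> int"
  assumes "r > 0" and "k > 0"
    and "\<forall>i\<ge>1. coprime (a i) (int k)"
  shows "(\<forall>l\<ge>1. (deriv ^^ l) (\<lambda>t. M_r r t n k) 1 =
            (\<Sum>m=1..l. of_int (stirling1s l m) * of_nat (Q_r r n k a m) / of_nat k ^ (r * m)))
       \<and> (\<forall>t. M_r r t n k = delta_r r n k +
            (\<Sum>l=1..k. (t - 1) ^ l / fact l *
               (\<Sum>m=1..l. of_int (stirling1s l m) * of_nat (Q_r r n k a m) / of_nat k ^ (r * m))))
       \<and> (\<forall>z::complex. (\<lambda>j. z ^ Suc j / fact (Suc j) * of_nat (Q_r r n k a (Suc j)) / of_nat k ^ (r * Suc j))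
            sums (M_r r (exp z) n k - delta_r r n k))"
proof -
  let ?c = "\<lambda>d. ram_r r n (k div d) / of_nat (k ^ r)"
  have fin: "finite {d. d dvd k}" and divisors_le: "{d. d dvd k} \<subseteq> {..k}"
    using assms(2) by (auto dest: dvd_imp_le)
  have M: "M_r r t n k = (\<Sum>d | d dvd k. ?c d * t ^ d)" for t
    by (simp add: M_r_def sum_distrib_left)
  have delta: "delta_r r n k = (\<Sum>d | d dvd k. ?c d)"
    using Q_r_moment[OF assms, where n = n and m = 0] by (simp add: Q_r_0 delta_r_def split: if_splits)
  show ?thesis
    unfolding M delta times_divide_eq_right[symmetric] Q_r_moment[OF assms]
    using higher_deriv_sum_monomials_at_1[OF fin, where c = ?c]
      sum_monomials_Taylor_at_1[OF fin divisors_le, where c = ?c]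
      sum_monomials_exp_sums[OF fin, where c = ?c] by blast
qed

end
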